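(* Let $X$ be a quasigeodesic metric space (e.g.\ a connected graph with its path metric) which is not coarsely equivalent to any metric space with bounded geometry. Then $h_\infty(X)=\infty$.
   Context: $X$ is quasigeodesic if there are $C\ge1,A\ge0$ such that any $x,x'$ are joined by a map $p\colon[0,d(x,x')]\to X$, $p(0)=x$, $p(d(x,x'))=x'$, with $C^{-1}|s-t|-A\le d(p(s),p(t))\le C|s-t|+A$. Bounded geometry: for every $r>0$ closed balls of radius $r$ have uniformly bounded cardinality. Coarse equivalence: a map $f$ with nondecreasing $\rho_\pm\colon[0,\infty)\to\mathbb R$, $\rho_-(r)\to\infty$, $\rho_-(d(x,x'))\le d(f(x),f(x'))\le\rho_+(d(x,x'))$, and coarsely dense image. Coarse entropy $h_\infty(X)=\lim_{\delta\to\infty}\lim_{R\to\infty}\limsup_{n\to\infty}\frac1n\log s(n,R,\delta,x_0)$, where $s(n,R,\delta,x_0)$ is the supremum of cardinalities of $R$-separated sets of $\delta$-paths $(x_0,\dots,x_n)$ ($d(x_i,x_{i+1})\le\delta$) starting at $x_0$, paths compared by $\max_i d(x_i,y_i)$. *)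

theory Defs
  imports "HOL-Analysis.Analysis"
begin

definition quasigeodesic :: "'a set \<Rightarrow> ('a \<Rightarrow> 'a \<Rightarrow> real) \<Rightarrow> bool" where
  "quasigeodesic M d \<longleftrightarrow>
     (\<exists>C A. C \<ge> 1 \<and> A \<ge> 0 \<and>
       (\<forall>x\<in>M. \<forall>x'\<in>M. \<exists>p :: real \<Rightarrow> 'a.
          p 0 = x \<and> p (d x x') = x' \<and> (\<forall>s\<in>{0..d x x'}. p s \<in> M) \<and>
          (\<forall>s\<in>{0..d x x'}. \<forall>t\<in>{0..d x x'}.
              \<bar>s - t\<bar> / C - A \<le> d (p s) (p t) \<and> d (p s) (p t) \<le> C * \<bar>s - t\<bar> + A)))"

definition bounded_geometry :: "'b set \<Rightarrow> ('b \<Rightarrow> 'b \<Rightarrow> real) \<Rightarrow> bool" where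
  "bounded_geometry Y e \<longleftrightarrow>
     (\<forall>r>0. \<exists>N::nat. \<forall>y\<in>Y. finite {z\<in>Y. e y z \<le> r} \<and> card {z\<in>Y. e y z \<le> r} \<le> N)"

definition coarse_equivalence ::
  "'a set \<Rightarrow> ('a \<Rightarrow> 'a \<Rightarrow> real) \<Rightarrow> 'b set \<Rightarrow> ('b \<Rightarrow> 'b \<Rightarrow> real) \<Rightarrow> ('a \<Rightarrow> 'b) \<Rightarrow> bool" where
  "coarse_equivalence M d Y e f \<longleftrightarrow>
     f \<in> M \<rightarrow> Y \<and>
     (\<exists>\<rho>m \<rho>p :: real \<Rightarrow> real.
        mono_on {0..} \<rho>m \<and> mono_on {0..} \<rho>p \<and> filterlim \<rho>m at_top at_top \<and>
        (\<forall>x\<in>M. \<forall>x'\<in>M. \<rho>m (d x x') \<le> e (f x) (f x') \<and> e (f x) (f x') \<le> \<rho>p (d x x'))) \<and>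
     (\<exists>K. \<forall>y\<in>Y. \<exists>x\<in>M. e y (f x) \<le> K)"

definition delta_paths :: "'a set \<Rightarrow> ('a \<Rightarrow> 'a \<Rightarrow> real) \<Rightarrow> nat \<Rightarrow> real \<Rightarrow> 'a \<Rightarrow> 'a list set" where
  "delta_paths M d n \<delta> x0 =
     {xs. length xs = Suc n \<and> xs ! 0 = x0 \<and> set xs \<subseteq> M \<and>
          (\<forall>i<n. d (xs ! i) (xs ! Suc i) \<le> \<delta>)}"

definition path_dist :: "('a \<Rightarrow> 'a \<Rightarrow> real) \<Rightarrow> 'a list \<Rightarrow> 'a list \<Rightarrow> real" where
  "path_dist d xs ys = Max {d (xs ! i) (ys ! i) | i. i < length xs}"

definition separated_paths ::
  "('a \<Rightarrow> 'a \<Rightarrow> real) \<Rightarrow> real \<Rightarrow> 'a list set \<Rightarrow> bool" where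
  "separated_paths d R S \<longleftrightarrow> (\<forall>p\<in>S. \<forall>q\<in>S. p \<noteq> q \<longrightarrow> path_dist d p q \<ge> R)"

definition sep_count :: "'a set \<Rightarrow> ('a \<Rightarrow> 'a \<Rightarrow> real) \<Rightarrow> nat \<Rightarrow> real \<Rightarrow> real \<Rightarrow> 'a \<Rightarrow> ereal" where
  "sep_count M d n R \<delta> x0 =
     (SUP S \<in> {S. S \<subseteq> delta_paths M d n \<delta> x0 \<and> finite S \<and> separated_paths d R S}. ereal (card S))"

definition eln :: "ereal \<Rightarrow> ereal" where
  "eln s = (if s = \<infinity> then \<infinity> else if s \<le> 0 then -\<infinity> else ereal (ln (real_of_ereal s)))"

definition coarse_entropy :: "'a set \<Rightarrow> ('a \<Rightarrow> 'a \<Rightarrow> real) \<Rightarrow> 'a \<Rightarrow> ereal" where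
  "coarse_entropy M d x0 =
     Lim at_top (\<lambda>\<delta>::real. Lim at_top (\<lambda>R::real.
        limsup (\<lambda>n::nat. ereal (1 / real n) * eln (sep_count M d n R \<delta> x0))))"

end

theory Submission
  imports Defs
begin

text \<open>
  If M is not coarsely equivalent to a space of bounded geometry, then neither is a maximal
  R-separated subset S of M, which is a coarsely dense net; hence for some radius r there are
  balls of radius r containing arbitrarily many R-separated points. Quasigeodesicity lets us
  join any two points by a discrete delta-path whose length is about their distance. So from
  the base point we walk to the centre y of a ball with N such points and then make k
  excursions y \<rightarrow> z \<rightarrow> y of length 2T, where T \<ge> r and z ranges over the N points.
  Different choices of the excursion targets give R-separated delta-paths of length n \<approx> 2Tk,
  so s(n,R,delta) \<ge> N^k and the exponential growth rate is at least ln N / (4T).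
  Since N is arbitrary, the coarse entropy is infinite.
\<close>

section \<open>Separated nets\<close>

definition separated :: "('a \<Rightarrow> 'a \<Rightarrow> real) \<Rightarrow> real \<Rightarrow> 'a set \<Rightarrow> bool" where
  "separated d R F \<longleftrightarrow> (\<forall>p\<in>F. \<forall>q\<in>F. p \<noteq> q \<longrightarrow> R \<le> d p q)"

lemma separated_subset: "separated d R F \<Longrightarrow> G \<subseteq> F \<Longrightarrow> separated d R G"
  unfolding separated_def by blast

lemma not_bounded_geometry_large_balls:
  assumes "\<not> bounded_geometry Y e"
  obtains r where "r > 0" "\<And>N. \<exists>y\<in>Y. \<exists>B. B \<subseteq> {z\<in>Y. e y z \<le> r} \<and> finite B \<and> card B = N"
proof -
  obtain r where "r > 0"
    and unbounded: "\<And>N. \<exists>y\<in>Y. \<not> (finite {z\<in>Y. e y z \<le> r} \<and> card {z\<in>Y. e y z \<le> r} \<le> N)"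
    using assms unfolding bounded_geometry_def by blast
  have "\<exists>B. B \<subseteq> U \<and> finite B \<and> card B = N" if "\<not> (finite U \<and> card U \<le> N)" for U :: "'a set" and N
    using that infinite_arbitrarily_large obtain_subset_with_card_n
    by (metis nat_le_linear)
  then show ?thesis
    using that \<open>r > 0\<close> unbounded by meson
qed

context Metric_space
begin

lemma maximal_separated_subset:
  assumes "R > 0"
  obtains S where "S \<subseteq> M" "separated d R S" "\<And>x. x \<in> M \<Longrightarrow> \<exists>s\<in>S. d x s < R"
proof -
  define A where "A = {S. S \<subseteq> M \<and> separated d R S}"
  have "\<Union>C \<in> A" if "C \<in> chains A" for C
  proof -
    have CA: "C \<subseteq> A" and ch: "\<forall>X\<in>C. \<forall>Y\<in>C. X \<subseteq> Y \<or> Y \<subseteq> X"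
      using that unfolding chains_def chain_subset_def by auto
    show ?thesis
      unfolding A_def separated_def
    proof (intro CollectI conjI ballI impI)
      show "\<Union>C \<subseteq> M"
        using CA by (auto simp: A_def)
      fix p q assume "p \<in> \<Union>C" "q \<in> \<Union>C" "p \<noteq> q"
      then obtain Z where "Z \<in> C" "p \<in> Z" "q \<in> Z"
        using ch by blast
      then show "R \<le> d p q"
        using CA \<open>p \<noteq> q\<close> by (auto simp: A_def separated_def)
    qed
  qed
  then obtain S where "S \<in> A" and S_max: "\<And>X. X \<in> A \<Longrightarrow> S \<subseteq> X \<Longrightarrow> X = S"
    using Zorn_Lemma[of A] by blast
  then have SM: "S \<subseteq> M" and S_sep: "separated d R S"
    by (auto simp: A_def)
  have "\<exists>s\<in>S. d x s < R" if x: "x \<in> M" for x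
  proof (rule ccontr)
    assume far: "\<not> (\<exists>s\<in>S. d x s < R)"
    then have "insert x S \<in> A"
      using SM S_sep x by (auto simp: A_def separated_def commute not_less)
    then have "x \<in> S"
      using S_max by blast
    then show False
      using far x assms by auto
  qed
  then show ?thesis
    using that SM S_sep by blast
qed

lemma Metric_space_tagged:
  assumes "S \<subseteq> M"
  shows "Metric_space (S \<times> {c}) (\<lambda>a b. d (fst a) (fst b))"
  using assms by unfold_locales (auto simp: commute subset_iff intro: triangle)

lemma coarse_equivalence_tagged_retraction:
  assumes "S \<subseteq> M" and g: "\<And>x. x \<in> M \<Longrightarrow> g x \<in> S \<and> d x (g x) \<le> K"
  shows "coarse_equivalence M d (S \<times> {c}) (\<lambda>a b. d (fst a) (fst b)) (\<lambda>x. (g x, c))"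
  unfolding coarse_equivalence_def
proof (intro conjI)
  show "(\<lambda>x. (g x, c)) \<in> M \<rightarrow> S \<times> {c}"
    using g by auto
  show "\<exists>K'. \<forall>y\<in>S \<times> {c}. \<exists>x\<in>M. d (fst y) (fst (g x, c)) \<le> K'"
    using g assms(1) by (intro exI[of _ K]) auto
  have "d x x' - 2 * K \<le> d (g x) (g x') \<and> d (g x) (g x') \<le> d x x' + 2 * K"
    if "x \<in> M" "x' \<in> M" for x x'
  proof -
    have "g x \<in> M" "g x' \<in> M" "d x (g x) \<le> K" "d x' (g x') \<le> K"
      using g that assms(1) by auto
    then show ?thesis
      using that triangle[of x "g x" x'] triangle[of "g x" "g x'" x']
        triangle[of "g x" x "g x'"] triangle[of x x' "g x'"] commute[of x "g x"] commute[of x' "g x'"]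
      by auto
  qed
  moreover have "filterlim (\<lambda>t::real. t - 2 * K) at_top at_top"
    by (rule filterlim_tendsto_add_at_top[of "\<lambda>_. - 2 * K", simplified]) (auto intro: filterlim_ident)
  ultimately show "\<exists>\<rho>m \<rho>p. mono_on {0..} \<rho>m \<and> mono_on {0..} \<rho>p \<and> filterlim \<rho>m at_top at_top \<and>
      (\<forall>x\<in>M. \<forall>x'\<in>M. \<rho>m (d x x') \<le> d (fst (g x, c)) (fst (g x', c)) \<and>
                       d (fst (g x, c)) (fst (g x', c)) \<le> \<rho>p (d x x'))"
    by (intro exI[of _ "\<lambda>t. t - 2 * K"] exI[of _ "\<lambda>t. t + 2 * K"]) (auto intro: mono_onI)
qed

lemma large_separated_sets_in_balls:
  assumes "R > 0"
    and not_coarse_bg: "\<not> (\<exists>(Y :: ('a \<times> nat) set) e f. Metric_space Y e \<and> bounded_geometry Y e \<and>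
                                       coarse_equivalence M d Y e f)"
  obtains r where "r > 0"
    "\<And>N. \<exists>y\<in>M. \<exists>F. F \<subseteq> M \<and> finite F \<and> card F = N \<and> (\<forall>z\<in>F. d y z \<le> r) \<and> separated d R F"
proof -
  obtain S where SM: "S \<subseteq> M" and S_sep: "separated d R S" and S_net: "\<And>x. x \<in> M \<Longrightarrow> \<exists>s\<in>S. d x s < R"
    using maximal_separated_subset[OF \<open>R > 0\<close>] by blast
  obtain g where g: "\<And>x. x \<in> M \<Longrightarrow> g x \<in> S \<and> d x (g x) \<le> R"
    using S_net by (metis less_imp_le)
  define Y :: "('a \<times> nat) set" where "Y = S \<times> {0}"
  define e where "e a b = d (fst a) (fst b)" for a b :: "'a \<times> nat"
  have "Metric_space Y e" "coarse_equivalence M d Y e (\<lambda>x. (g x, 0))"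
    unfolding Y_def e_def
    using Metric_space_tagged[OF SM] coarse_equivalence_tagged_retraction[OF SM g] by auto
  then have "\<not> bounded_geometry Y e"
    using not_coarse_bg by blast
  then obtain r where "r > 0" and balls: "\<And>N. \<exists>y\<in>Y. \<exists>B. B \<subseteq> {z\<in>Y. e y z \<le> r} \<and> finite B \<and> card B = N"
    by (rule not_bounded_geometry_large_balls) auto
  have "\<exists>y\<in>M. \<exists>F. F \<subseteq> M \<and> finite F \<and> card F = N \<and> (\<forall>z\<in>F. d y z \<le> r) \<and> separated d R F" for N
  proof -
    obtain y B where "y \<in> Y" and B: "B \<subseteq> {z\<in>Y. e y z \<le> r}" "finite B" "card B = N"
      using balls by blast
    have "inj_on fst B" "fst ` B \<subseteq> S"
      using B(1) by (auto simp: Y_def inj_on_def)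
    then show ?thesis
      using \<open>y \<in> Y\<close> B SM S_sep card_image separated_subset
      by (intro bexI[of _ "fst y"] exI[of _ "fst ` B"]) (auto simp: Y_def e_def)
  qed
  then show ?thesis
    using that \<open>r > 0\<close> by blast
qed

end

section \<open>Discrete paths\<close>

definition delta_seq :: "'a set \<Rightarrow> ('a \<Rightarrow> 'a \<Rightarrow> real) \<Rightarrow> real \<Rightarrow> (nat \<Rightarrow> 'a) \<Rightarrow> bool" where
  "delta_seq M d \<delta> g \<longleftrightarrow> (\<forall>i. g i \<in> M) \<and> (\<forall>i. d (g i) (g (Suc i)) \<le> \<delta>)"

definition seq_append :: "nat \<Rightarrow> (nat \<Rightarrow> 'a) \<Rightarrow> (nat \<Rightarrow> 'a) \<Rightarrow> nat \<Rightarrow> 'a" where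
  "seq_append L g h i = (if i < L then g i else h (i - L))"

lemma seq_append_less [simp]: "i < L \<Longrightarrow> seq_append L g h i = g i"
  by (simp add: seq_append_def)

lemma seq_append_ge [simp]: "L \<le> i \<Longrightarrow> seq_append L g h i = h (i - L)"
  by (simp add: seq_append_def)

lemma delta_seq_mono: "delta_seq M d \<delta> g \<Longrightarrow> \<delta> \<le> \<delta>' \<Longrightarrow> delta_seq M d \<delta>' g"
  unfolding delta_seq_def by (meson order_trans)

lemma (in Metric_space) delta_seq_const: "y \<in> M \<Longrightarrow> 0 \<le> \<delta> \<Longrightarrow> delta_seq M d \<delta> (\<lambda>_. y)"
  by (simp add: delta_seq_def)

lemma delta_seq_append:
  assumes "delta_seq M d \<delta> g" "delta_seq M d \<delta> h" "g L = h 0"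
  shows "delta_seq M d \<delta> (seq_append L g h)"
  unfolding delta_seq_def
proof (intro conjI allI)
  fix i
  show "seq_append L g h i \<in> M"
    using assms by (auto simp: seq_append_def delta_seq_def)
  consider "Suc i < L" | "Suc i = L" | "L \<le> i"
    by linarith
  then show "d (seq_append L g h i) (seq_append L g h (Suc i)) \<le> \<delta>"
  proof cases
    case 2
    then have "seq_append L g h i = g i" "seq_append L g h (Suc i) = g (Suc i)"
      using assms(3) by auto
    then show ?thesis
      using assms(1) by (simp add: delta_seq_def)
  next
    case 3
    then have "Suc i - L = Suc (i - L)"
      by auto
    then show ?thesis
      using assms 3 by (auto simp: delta_seq_def)
  qed (use assms in \<open>auto simp: delta_seq_def\<close>)
qed

lemma delta_seq_foldr_append:
  assumes "delta_seq M d \<delta> h" "P > 0"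
    and "\<forall>l\<in>set ls. delta_seq M d \<delta> l \<and> l 0 = h 0 \<and> l P = h 0"
  shows "delta_seq M d \<delta> (foldr (seq_append P) ls h) \<and> foldr (seq_append P) ls h 0 = h 0"
  using assms(3) by (induction ls) (auto intro: delta_seq_append simp: assms(1,2))

lemma foldr_seq_append_nth:
  "b < length ls \<Longrightarrow> i < P \<Longrightarrow> foldr (seq_append P) ls h (P * b + i) = (ls ! b) i"
proof (induction ls arbitrary: b)
  case (Cons l ls)
  then show ?case
    by (cases b) (auto simp: add.assoc)
qed simp

lemma delta_seq_prefix_in_delta_paths:
  "delta_seq M d \<delta> g \<Longrightarrow> map g [0..<Suc n] \<in> delta_paths M d n \<delta> (g 0)"
  unfolding delta_paths_def delta_seq_def by (auto simp del: upt_Suc)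

lemma coarse_lipschitz_path_sample:
  fixes p :: "real \<Rightarrow> 'a"
  assumes "D \<ge> 0" "C \<ge> 0" and p_M: "\<forall>s\<in>{0..D}. p s \<in> M"
    and p_lip: "\<forall>s\<in>{0..D}. \<forall>t\<in>{0..D}. d (p s) (p t) \<le> C * \<bar>s - t\<bar> + A"
  shows "\<exists>g. g 0 = p 0 \<and> delta_seq M d (C + A) g \<and> (\<forall>i\<ge>nat \<lceil>D\<rceil>. g i = p D)"
proof -
  define m where "m = nat \<lceil>D\<rceil>"
  define s where "s i = real (min i m) * D / real m" for i
  have "D \<le> real m"
    unfolding m_def by linarith
  have s_range: "s i \<in> {0..D}" for i
    using \<open>D \<ge> 0\<close> mult_right_mono[of "real (min i m)" "real m" D]
    by (cases "m = 0") (auto simp: s_def field_simps)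
  have s_end: "s i = D" if "i \<ge> m" for i
    using that \<open>D \<le> real m\<close> \<open>D \<ge> 0\<close> by (cases "m = 0") (auto simp: s_def)
  have s_step: "\<bar>s i - s (Suc i)\<bar> \<le> 1" for i
  proof (cases "i < m")
    case True
    then have "s (Suc i) - s i = D / real m"
      by (simp add: s_def min_def field_simps)
    moreover have "0 \<le> D / real m" "D / real m \<le> 1"
      using True \<open>D \<le> real m\<close> \<open>D \<ge> 0\<close> by (auto simp: divide_le_eq_1)
    ultimately show ?thesis
      by simp
  qed (simp add: s_end)
  have "d (p (s i)) (p (s (Suc i))) \<le> C + A" for i
    using p_lip s_range[of i] s_range[of "Suc i"] mult_left_mono[OF s_step[of i] \<open>C \<ge> 0\<close>] by force
  moreover have "s 0 = 0"
    by (simp add: s_def)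
  ultimately show ?thesis
    using p_M s_range s_end unfolding delta_seq_def m_def
    by (intro exI[of _ "\<lambda>i. p (s i)"]) auto
qed

definition delta_connector ::
  "'a set \<Rightarrow> ('a \<Rightarrow> 'a \<Rightarrow> real) \<Rightarrow> real \<Rightarrow> ('a \<Rightarrow> 'a \<Rightarrow> nat \<Rightarrow> 'a) \<Rightarrow> bool" where
  "delta_connector M d \<delta> \<gamma> \<longleftrightarrow>
     (\<forall>a\<in>M. \<forall>b\<in>M. \<gamma> a b 0 = a \<and> delta_seq M d \<delta> (\<gamma> a b) \<and> (\<forall>i\<ge>nat \<lceil>d a b\<rceil>. \<gamma> a b i = b))"

lemma delta_connector_mono:
  "delta_connector M d \<delta> \<gamma> \<Longrightarrow> \<delta> \<le> \<delta>' \<Longrightarrow> delta_connector M d \<delta>' \<gamma>"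
  unfolding delta_connector_def using delta_seq_mono by blast

lemma (in Metric_space) quasigeodesic_imp_delta_connector:
  assumes "quasigeodesic M d"
  obtains \<delta> \<gamma> where "\<delta> > 0" "delta_connector M d \<delta> \<gamma>"
proof -
  obtain C A where "C \<ge> 1" "A \<ge> 0" and qg: "\<forall>x\<in>M. \<forall>x'\<in>M. \<exists>p :: real \<Rightarrow> 'a.
      p 0 = x \<and> p (d x x') = x' \<and> (\<forall>s\<in>{0..d x x'}. p s \<in> M) \<and>
      (\<forall>s\<in>{0..d x x'}. \<forall>t\<in>{0..d x x'}.
          \<bar>s - t\<bar> / C - A \<le> d (p s) (p t) \<and> d (p s) (p t) \<le> C * \<bar>s - t\<bar> + A)"
    using assms unfolding quasigeodesic_def by blast
  define P where "P a b g \<longleftrightarrow> g 0 = a \<and> delta_seq M d (C + A) g \<and> (\<forall>i\<ge>nat \<lceil>d a b\<rceil>. g i = b)"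
    for a b and g :: "nat \<Rightarrow> 'a"
  have "\<exists>g. P a b g" if "a \<in> M" "b \<in> M" for a b
  proof -
    obtain p where "p 0 = a" "p (d a b) = b" "\<forall>s\<in>{0..d a b}. p s \<in> M"
      "\<forall>s\<in>{0..d a b}. \<forall>t\<in>{0..d a b}. d (p s) (p t) \<le> C * \<bar>s - t\<bar> + A"
      using bspec[OF bspec[OF qg \<open>a \<in> M\<close>] \<open>b \<in> M\<close>] by (elim exE conjE) blast
    then show ?thesis
      using coarse_lipschitz_path_sample[of "d a b" C p M d A] \<open>C \<ge> 1\<close> by (auto simp: P_def)
  qed
  then have "delta_connector M d (C + A) (\<lambda>a b. SOME g. P a b g)"
    unfolding delta_connector_def by (metis (mono_tags) P_def someI_ex)
  moreover have "C + A > 0"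
    using \<open>C \<ge> 1\<close> \<open>A \<ge> 0\<close> by simp
  ultimately show ?thesis
    using that by blast
qed

definition excursion_seq :: "nat \<Rightarrow> ('a \<Rightarrow> 'a \<Rightarrow> nat \<Rightarrow> 'a) \<Rightarrow> 'a \<Rightarrow> 'a list \<Rightarrow> nat \<Rightarrow> 'a" where
  "excursion_seq T \<gamma> y w =
     foldr (seq_append (2 * T)) (map (\<lambda>z. seq_append T (\<gamma> y z) (\<gamma> z y)) w) (\<lambda>_. y)"

lemma (in Metric_space) excursion_seq:
  assumes \<gamma>: "delta_connector M d \<delta> \<gamma>" and "0 \<le> \<delta>" "T > 0" "y \<in> M" "set w \<subseteq> M"
    and near: "\<forall>z\<in>set w. d y z \<le> T"
  shows "delta_seq M d \<delta> (excursion_seq T \<gamma> y w)" "excursion_seq T \<gamma> y w 0 = y"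
    and "\<And>b. b < length w \<Longrightarrow> excursion_seq T \<gamma> y w (2 * T * b + T) = w ! b"
proof -
  have arrival: "\<gamma> a b T = b" if "a \<in> M" "b \<in> M" "d a b \<le> T" for a b
  proof -
    have "nat \<lceil>d a b\<rceil> \<le> T"
      using that(3) by (simp add: nat_le_iff ceiling_le_iff)
    then show ?thesis
      using \<gamma> that(1,2) unfolding delta_connector_def by blast
  qed
  have "delta_seq M d \<delta> (seq_append T (\<gamma> y z) (\<gamma> z y)) \<and> seq_append T (\<gamma> y z) (\<gamma> z y) 0 = y
      \<and> seq_append T (\<gamma> y z) (\<gamma> z y) (2 * T) = y" if "z \<in> set w" for z
  proof -
    have "z \<in> M" "d y z \<le> T" "d z y \<le> T"
      using that assms(5) near commute by auto
    then show ?thesis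
      using \<gamma> \<open>y \<in> M\<close> \<open>T > 0\<close> arrival[of y z] arrival[of z y]
      by (auto simp: delta_connector_def intro!: delta_seq_append)
  qed
  then show "delta_seq M d \<delta> (excursion_seq T \<gamma> y w)" "excursion_seq T \<gamma> y w 0 = y"
    using delta_seq_foldr_append[OF delta_seq_const[OF \<open>y \<in> M\<close> \<open>0 \<le> \<delta>\<close>], of "2 * T"] \<open>T > 0\<close>
    by (auto simp: excursion_seq_def)
  fix b assume "b < length w"
  then have "w ! b \<in> M" "\<gamma> (w ! b) y 0 = w ! b"
    using assms(5) \<gamma> \<open>y \<in> M\<close> nth_mem unfolding delta_connector_def by blast+
  then show "excursion_seq T \<gamma> y w (2 * T * b + T) = w ! b"
    using foldr_seq_append_nth[of b "map (\<lambda>z. seq_append T (\<gamma> y z) (\<gamma> z y)) w" T "2 * T"]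
      \<open>b < length w\<close> \<open>T > 0\<close>
    by (simp add: excursion_seq_def)
qed

lemma (in Metric_space) approach_then_excursions:
  assumes \<gamma>: "delta_connector M d \<delta> \<gamma>" and "0 \<le> \<delta>" "T > 0" "x0 \<in> M" "y \<in> M"
    and w: "set w \<subseteq> M" "\<forall>z\<in>set w. d y z \<le> T" and L: "L = nat \<lceil>d x0 y\<rceil>"
  defines "g \<equiv> seq_append L (\<gamma> x0 y) (excursion_seq T \<gamma> y w)"
  shows "delta_seq M d \<delta> g" "g 0 = x0" "\<And>b. b < length w \<Longrightarrow> g (L + 2 * T * b + T) = w ! b"
proof -
  note exc = excursion_seq[OF \<gamma> \<open>0 \<le> \<delta>\<close> \<open>T > 0\<close> \<open>y \<in> M\<close> w]
  have "\<gamma> x0 y L = y" "\<gamma> x0 y 0 = x0" "delta_seq M d \<delta> (\<gamma> x0 y)"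
    using \<gamma> \<open>x0 \<in> M\<close> \<open>y \<in> M\<close> unfolding delta_connector_def L by blast+
  then show "delta_seq M d \<delta> g"
    using exc(1,2) unfolding g_def by (auto intro: delta_seq_append)
  show "g 0 = x0"
    using exc(2) \<open>\<gamma> x0 y L = y\<close> \<open>\<gamma> x0 y 0 = x0\<close> unfolding g_def by (cases "L = 0") simp_all
  show "g (L + 2 * T * b + T) = w ! b" if "b < length w" for b
    using exc(3)[OF that] by (simp add: g_def add.assoc)
qed

section \<open>Counting separated paths\<close>

lemma path_dist_ge_nth: "i < length xs \<Longrightarrow> d (xs ! i) (ys ! i) \<le> path_dist d xs ys"
proof -
  assume "i < length xs"
  have "{d (xs ! i) (ys ! i) |i. i < length xs} = (\<lambda>i. d (xs ! i) (ys ! i)) ` {..<length xs}"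
    by auto
  then show ?thesis
    unfolding path_dist_def using \<open>i < length xs\<close> by (auto intro: Max_ge)
qed

lemma sep_count_ge_card:
  "S \<subseteq> delta_paths M d n \<delta> x0 \<Longrightarrow> finite S \<Longrightarrow> separated_paths d R S
    \<Longrightarrow> ereal (card S) \<le> sep_count M d n R \<delta> x0"
  unfolding sep_count_def by (rule SUP_upper) auto

lemma (in Metric_space) sep_count_ge_card_power:
  assumes \<gamma>: "delta_connector M d \<delta> \<gamma>" and "0 \<le> \<delta>" "x0 \<in> M" "y \<in> M"
    and F: "F \<subseteq> M" "finite F" "separated d R F" "\<forall>z\<in>F. d y z \<le> T"
    and "T > 0" and n: "nat \<lceil>d x0 y\<rceil> + 2 * T * k \<le> n"
  shows "ereal (real (card F) ^ k) \<le> sep_count M d n R \<delta> x0"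
proof -
  define L where "L = nat \<lceil>d x0 y\<rceil>"
  define seq where "seq w = seq_append L (\<gamma> x0 y) (excursion_seq T \<gamma> y w)" for w
  define path where "path w = map (seq w) [0..<Suc n]" for w
  define W where "W = {w. set w \<subseteq> F \<and> length w = k}"
  have seq: "delta_seq M d \<delta> (seq w)" "seq w 0 = x0"
    "\<And>b. b < k \<Longrightarrow> path w ! (L + 2 * T * b + T) = w ! b" if "w \<in> W" for w
  proof -
    have w: "set w \<subseteq> M" "\<forall>z\<in>set w. d y z \<le> T" "length w = k"
      using that F unfolding W_def by auto
    note g = approach_then_excursions[OF \<gamma> \<open>0 \<le> \<delta>\<close> \<open>T > 0\<close> \<open>x0 \<in> M\<close> \<open>y \<in> M\<close> w(1,2) L_def]
    show "delta_seq M d \<delta> (seq w)" "seq w 0 = x0"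
      using g(1,2) unfolding seq_def .
    fix b assume "b < k"
    then have "L + 2 * T * b + T < Suc n"
      using n mult_le_mono2[of "Suc b" k "2 * T"] unfolding L_def by simp
    then show "path w ! (L + 2 * T * b + T) = w ! b"
      using g(3) \<open>b < k\<close> w(3) by (simp add: path_def seq_def del: upt_Suc)
  qed
  have far: "path w \<noteq> path w' \<and> R \<le> path_dist d (path w) (path w')"
    if ww: "w \<in> W" "w' \<in> W" "w \<noteq> w'" for w w'
  proof -
    have len: "length w = k" "length w' = k" and sub: "set w \<subseteq> F" "set w' \<subseteq> F"
      using ww(1,2) unfolding W_def by auto
    then obtain b where b: "b < k" "w ! b \<noteq> w' ! b"
      using ww(3) nth_equalityI[of w w'] by auto
    define i where "i = L + 2 * T * b + T"
    have at_i: "path w ! i = w ! b" "path w' ! i = w' ! b"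
      unfolding i_def using seq(3)[OF ww(1) b(1)] seq(3)[OF ww(2) b(1)] .
    have "w ! b \<in> F" "w' ! b \<in> F"
      using b(1) len sub by (auto dest: nth_mem)
    then have "R \<le> d (w ! b) (w' ! b)"
      using F(3) b(2) unfolding separated_def by blast
    moreover have "i < length (path w)"
      using n b(1) mult_le_mono2[of "Suc b" k "2 * T"] unfolding i_def L_def path_def by simp
    ultimately show ?thesis
      using path_dist_ge_nth[of i "path w" d "path w'"] at_i b(2) by auto
  qed
  have "inj_on path W"
    unfolding inj_on_def using far by blast
  then have "card (path ` W) = card F ^ k"
    using card_lists_length_eq[OF \<open>finite F\<close>, of k] by (simp add: card_image W_def)
  moreover have "path ` W \<subseteq> delta_paths M d n \<delta> x0"
  proof (rule image_subsetI)
    fix w assume "w \<in> W"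
    then show "path w \<in> delta_paths M d n \<delta> x0"
      using delta_seq_prefix_in_delta_paths[OF seq(1)[OF \<open>w \<in> W\<close>]] seq(2)[OF \<open>w \<in> W\<close>]
      by (simp add: path_def)
  qed
  moreover have "finite (path ` W)"
    unfolding W_def using finite_lists_length_eq[OF \<open>finite F\<close>] by simp
  moreover have "separated_paths d R (path ` W)"
    using far unfolding separated_paths_def by blast
  ultimately show ?thesis
    using sep_count_ge_card[of "path ` W"] by simp
qed

lemma blocks_fill_half:
  fixes L P n :: nat
  assumes "P > 0" "2 * (L + P) \<le> n"
  shows "L + P * ((n - L) div P) \<le> n" "n \<le> 2 * P * ((n - L) div P)"
proof -
  define q where "q = (n - L) div P"
  define m where "m = (n - L) mod P"
  have "P * q + m + L = n" "m < P"
    using mult_div_mod_eq[of P "n - L"] \<open>P > 0\<close> assms(2) unfolding q_def m_def by simp_all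
  moreover have "L + x \<le> n \<and> n \<le> 2 * x" if "x + m + L = n" "m < P" for x
    using that assms(2) by presburger
  ultimately have "L + P * q \<le> n" "n \<le> 2 * (P * q)"
    by blast+
  then show "L + P * ((n - L) div P) \<le> n" "n \<le> 2 * P * ((n - L) div P)"
    unfolding q_def by (simp_all only: mult.assoc)
qed

lemma eln_growth_ge:
  fixes N k n :: nat
  assumes "ereal (real N ^ k) \<le> s" "N \<ge> 1" "n > 0" "c * real n \<le> real k * ln (real N)"
  shows "ereal c \<le> ereal (1 / real n) * eln s"
proof (cases s)
  case (real v)
  have "real N ^ k > 0"
    using \<open>N \<ge> 1\<close> by simp
  moreover have "real N ^ k \<le> v"
    using assms(1) real by simp
  ultimately have "v > 0"
    by linarith
  then have "ln (real N ^ k) \<le> ln v"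
    using ln_le_cancel_iff[OF \<open>real N ^ k > 0\<close> \<open>v > 0\<close>] \<open>real N ^ k \<le> v\<close> by blast
  moreover have "ln (real N ^ k) = real k * ln (real N)"
    using \<open>N \<ge> 1\<close> by (simp add: ln_realpow)
  ultimately have "c \<le> ln v / real n"
    using assms(3,4) by (simp add: field_simps)
  then show ?thesis
    using real \<open>v > 0\<close> by (simp add: eln_def)
qed (use assms in \<open>auto simp: eln_def\<close>)

lemma Lim_at_top_eventually_const:
  fixes f :: "'a::linorder \<Rightarrow> 'b::t2_space"
  shows "eventually (\<lambda>x. f x = c) at_top \<Longrightarrow> Lim at_top f = c"
  by (rule tendsto_Lim[OF trivial_limit_at_top_linorder tendsto_eventually])

lemma (in Metric_space) eventually_growth_rate_ge:
  assumes \<gamma>: "delta_connector M d \<delta> \<gamma>" and "0 \<le> \<delta>" "x0 \<in> M" "y \<in> M"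
    and F: "F \<subseteq> M" "finite F" "F \<noteq> {}" "separated d R F" "\<forall>z\<in>F. d y z \<le> T"
    and "T > 0" "0 \<le> c" and ln_F: "4 * real T * c \<le> ln (card F)"
  shows "eventually (\<lambda>n. ereal c \<le> ereal (1 / real n) * eln (sep_count M d n R \<delta> x0)) sequentially"
proof -
  define L where "L = nat \<lceil>d x0 y\<rceil>"
  have "ereal c \<le> ereal (1 / real n) * eln (sep_count M d n R \<delta> x0)"
    if n: "2 * (L + 2 * T) \<le> n" for n
  proof -
    define k where "k = (n - L) div (2 * T)"
    have "L + 2 * T * k \<le> n" "n \<le> 4 * T * k"
      using blocks_fill_half[OF _ n] \<open>T > 0\<close> unfolding k_def by auto
    then have "ereal (real (card F) ^ k) \<le> sep_count M d n R \<delta> x0"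
      using sep_count_ge_card_power[OF \<gamma> \<open>0 \<le> \<delta>\<close> \<open>x0 \<in> M\<close> \<open>y \<in> M\<close> F(1,2,4,5) \<open>T > 0\<close>]
      unfolding L_def by blast
    moreover have "c * real n \<le> real k * ln (card F)"
    proof -
      have "real n \<le> 4 * real T * real k"
        using of_nat_mono[OF \<open>n \<le> 4 * T * k\<close>] by simp
      then have "c * real n \<le> c * (4 * real T * real k)"
        using \<open>0 \<le> c\<close> by (rule mult_left_mono)
      also have "\<dots> \<le> real k * ln (card F)"
        using mult_left_mono[OF ln_F, of "real k"] by (simp add: algebra_simps)
      finally show ?thesis .
    qed
    moreover have "card F \<ge> 1"
      using F(2,3) by (simp add: Suc_le_eq card_gt_0_iff)
    ultimately show ?thesis
      using eln_growth_ge n \<open>T > 0\<close> by simp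
  qed
  then show ?thesis
    by (auto simp: eventually_sequentially)
qed

lemma (in Metric_space) limsup_sep_count_growth_infinite:
  assumes "delta_connector M d \<delta> \<gamma>" and "0 \<le> \<delta>" "R > 0" "x0 \<in> M"
    and not_coarse_bg: "\<not> (\<exists>(Y :: ('a \<times> nat) set) e f. Metric_space Y e \<and> bounded_geometry Y e \<and>
                                       coarse_equivalence M d Y e f)"
  shows "limsup (\<lambda>n. ereal (1 / real n) * eln (sep_count M d n R \<delta> x0)) = \<infinity>"
proof (rule ereal_top)
  fix c :: real
  obtain r where "r > 0" and balls:
    "\<And>N. \<exists>y\<in>M. \<exists>F. F \<subseteq> M \<and> finite F \<and> card F = N \<and> (\<forall>z\<in>F. d y z \<le> r) \<and> separated d R F"
    using large_separated_sets_in_balls[OF \<open>R > 0\<close> not_coarse_bg] by blast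
  define T where "T = nat \<lceil>r\<rceil>"
  define c' where "c' = max c 0"
  define N where "N = nat \<lceil>exp (4 * real T * c')\<rceil> + 1"
  have "0 \<le> c'"
    by (simp add: c'_def)
  obtain y F where "y \<in> M" "F \<subseteq> M" "finite F" "card F = N" "separated d R F"
    and near_r: "\<forall>z\<in>F. d y z \<le> r"
    using balls[of N] by blast
  have "T > 0" "F \<noteq> {}"
    using \<open>r > 0\<close> \<open>card F = N\<close> by (auto simp: T_def N_def)
  have near: "\<forall>z\<in>F. d y z \<le> T"
    using near_r real_nat_ceiling_ge[of r] unfolding T_def by force
  have "exp (4 * real T * c') \<le> card F"
    unfolding \<open>card F = N\<close> N_def by linarith
  then have "4 * real T * c' \<le> ln (card F)"
    using ln_le_cancel_iff[of "exp (4 * real T * c')" "card F"] \<open>F \<noteq> {}\<close> \<open>finite F\<close>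
    by (simp add: card_gt_0_iff)
  then have "eventually (\<lambda>n. ereal c' \<le> ereal (1 / real n) * eln (sep_count M d n R \<delta> x0)) sequentially"
    by (rule eventually_growth_rate_ge[OF assms(1,2,4) \<open>y \<in> M\<close> \<open>F \<subseteq> M\<close> \<open>finite F\<close> \<open>F \<noteq> {}\<close>
          \<open>separated d R F\<close> near \<open>T > 0\<close> \<open>0 \<le> c'\<close>])
  then have "ereal c' \<le> limsup (\<lambda>n. ereal (1 / real n) * eln (sep_count M d n R \<delta> x0))"
    by (intro le_Limsup) auto
  then show "ereal c \<le> limsup (\<lambda>n. ereal (1 / real n) * eln (sep_count M d n R \<delta> x0))"
    by (rule order_trans[rotated]) (simp add: c'_def)
qed

theorem mainTheorem19:
  fixes M :: "'a set" and d :: "'a \<Rightarrow> 'a \<Rightarrow> real"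
  assumes "Metric_space M d"
    and "quasigeodesic M d"
    and "\<not> (\<exists>(Y :: ('a \<times> nat) set) e f. Metric_space Y e \<and> bounded_geometry Y e \<and>
                                       coarse_equivalence M d Y e f)"
  shows "\<forall>x0\<in>M. coarse_entropy M d x0 = \<infinity>"
proof
  fix x0 assume "x0 \<in> M"
  interpret Metric_space M d
    by (rule assms(1))
  obtain \<delta>0 \<gamma> where "\<delta>0 > 0" "delta_connector M d \<delta>0 \<gamma>"
    using quasigeodesic_imp_delta_connector[OF assms(2)] by blast
  have "limsup (\<lambda>n. ereal (1 / real n) * eln (sep_count M d n R \<delta> x0)) = \<infinity>"
    if "\<delta>0 \<le> \<delta>" "R > 0" for \<delta> R
  proof (rule limsup_sep_count_growth_infinite[OF _ _ \<open>R > 0\<close> \<open>x0 \<in> M\<close> assms(3)])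
    show "delta_connector M d \<delta> \<gamma>"
      using delta_connector_mono \<open>delta_connector M d \<delta>0 \<gamma>\<close> \<open>\<delta>0 \<le> \<delta>\<close> by blast
    show "0 \<le> \<delta>"
      using \<open>\<delta>0 > 0\<close> \<open>\<delta>0 \<le> \<delta>\<close> by simp
  qed
  then show "coarse_entropy M d x0 = \<infinity>"
    unfolding coarse_entropy_def
    by (intro Lim_at_top_eventually_const eventually_mono[OF eventually_ge_at_top[of \<delta>0]]
        eventually_mono[OF eventually_gt_at_top[of 0]]) auto
qed

end
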